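(* Assume the Framework (the Purification Postulate is not needed). Let $\rho_1,\rho_2,\rho_3\in\mathfrak S_1(\mathrm A)$ with $\rho_1\ne\rho_3$ and $\rho_2=p\rho_1+(1-p)\rho_3$ for some $0<p<1$, and let $\Psi_i\in\mathfrak S_1(\mathrm A\mathrm B)$ be a purification of $\rho_i$ for $i=1,2,3$ (i.e. $\Psi_i$ pure with $(\mathcal I_{\mathrm A}\otimes e_{\mathrm B})\Psi_i=\rho_i$). Then for no finite $N\ge1$ is there a transformation $\mathcal C\in\mathfrak T(\mathrm A^{\otimes N},\mathrm A\mathrm B)$ such that $\mathcal C(\rho_i^{\otimes N})=\Psi_i$ for all $i=1,2,3$.
   Context: Framework. We work in an operational-probabilistic theory: there is a collection of systems $\mathrm A,\mathrm B,\dots$, closed under a composition $\mathrm A\mathrm B$ (associative, symmetric up to a reversible swap, with a trivial system $\mathrm I$ satisfying $\mathrm A\mathrm I=\mathrm A$); for each pair of systems a set $\mathfrak T(\mathrm A,\mathrm B)$ of transformations; a test from $\mathrm A$ to $\mathrm B$ is a finite collection $\{\mathcal C_i\}_{i\in X}\subseteq\mathfrak T(\mathrm A,\mathrm B)$, and every transformation belongs to some test. Tests are closed under sequential composition, parallel composition ($\otimes$), coarse-graining (summing outcomes over the blocks of a partition of $X$) and conditioning (choosing the next test depending on the outcome of the previous one). States of $\mathrm A$ are the elements of $\mathfrak S(\mathrm A):=\mathfrak T(\mathrm I,\mathrm A)$, effects are the elements of $\mathfrak T(\mathrm A,\mathrm I)$, and transformations $\mathrm I\to\mathrm I$ are probabilities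 in $[0,1]$ (those of a test sum to $1$; composition is multiplication). An effect $a$ and a state $\rho$ give the probability $(a|\rho)$. States (effects) are identified when they give equal probabilities on all effects (states); transformations $\mathcal C,\mathcal C'$ are identified when $\mathcal C\otimes\mathcal I_{\mathrm S}$ and $\mathcal C'\otimes\mathcal I_{\mathrm S}$ act identically on all states of $\mathrm A\mathrm S$ for every system $\mathrm S$. States span a finite-dimensional real vector space $\mathfrak S_{\mathbb R}(\mathrm A)$, transformations act linearly, and $\mathfrak T_{\mathbb R}(\mathrm A,\mathrm B)$ is the real span of $\mathfrak T(\mathrm A,\mathrm B)$. Standing assumptions: (i) causality: each system $\mathrm A$ has a unique deterministic effect $e_{\mathrm A}$ (the effect forming a one-outcome observation test), and $e_{\mathrm A\mathrm B}=e_{\mathrm A}\otimes e_{\mathrm B}$; (ii) local discriminability: if two states of $\mathrm A\mathrm B$ differ, some product effect $a\otimes b$ gives them different probabilities; (iii) all sets of states are closed, the theory is not deterministic (hence all sets of states, effects and transformations are convex), and perfectly distinguishable states exist. A state $\rho$ is normalized if $(e|\rho)=1$; $\mathfrak S_1(\mathrm A)$ is the set of normalized states. A channel is a $\mathcal C\in\mathfrak T(\mathrm A,\mathrm B)$ with $e_{\mathrm B}\circ\mathcal C=e_{\mathrm A}$. A channel $\mathcal U\in\mathfrak T(\mathrm A,\mathrm B)$ is reversible if some channel $\mathcal W\in\mathfrak T(\mathrm B,\mathrm A)$ satisfies $\mathcal W\mathcal U=\mathcal I_{\mathrm A}$, $\mathcal U\mathcal W=\mathcal I_{\mathrm B}$;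 $\mathbf G_{\mathrm A}$ is the group of reversible channels on $\mathrm A$. The marginal of a state $\sigma$ of $\mathrm A\mathrm B$ on $\mathrm A$ is $(\mathcal I_{\mathrm A}\otimes e_{\mathrm B})\sigma$. Refinement. For $\mathcal C\in\mathfrak T(\mathrm A,\mathrm B)$, write $\mathcal D\prec\mathcal C$ if there are a test $\{\mathcal D_j\}_{j\in Y}$ and $Y_0\subseteq Y$ with $\mathcal C=\sum_{j\in Y_0}\mathcal D_j$ and $\mathcal D\in\{\mathcal D_j\}_{j\in Y_0}$; the refinement set is $D_{\mathcal C}=\{\mathcal D:\mathcal D\prec\mathcal C\}$. $\mathcal C$ is atomic if $\mathcal D\prec\mathcal C$ implies $\mathcal D=\lambda\mathcal C$ for some $\lambda\in[0,1]$. A pure state is an atomic state; a state is mixed otherwise. *)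

theory Defs
  imports Complex_Main
begin

text \<open>
An operational-probabilistic theory (OPT), with transformations identified
(equality of elements of the ambient real vector space 't is the identification
of transformations).  'The set trans A B' is the set of transformations from A to B,
'tests A B' the set of tests (finite families, encoded as lists), 'seqc D C' is the
sequential composition D after C, 'parc C D' is the parallel composition C (x) D,
'idt A' the identity on A, 'deff A' the deterministic effect e_A.
\<close>

record ('s, 't) opt_data =
  scomp :: "'s \<Rightarrow> 's \<Rightarrow> 's"
  sunit :: 's
  trans :: "'s \<Rightarrow> 's \<Rightarrow> 't set"
  tests :: "'s \<Rightarrow> 's \<Rightarrow> 't list set"
  seqc  :: "'t \<Rightarrow> 't \<Rightarrow> 't"
  parc  :: "'t \<Rightarrow> 't \<Rightarrow> 't"
  idt   :: "'s \<Rightarrow> 't"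
  deff  :: "'s \<Rightarrow> 't"

definition opt :: "('s, 't::real_vector) opt_data \<Rightarrow> bool" where
  "opt T \<longleftrightarrow>
    \<comment> \<open>trivial system\<close>
    (\<forall>A. scomp T A (sunit T) = A)
    \<comment> \<open>tests are finite nonempty collections of transformations; every transformation is in a test\<close>
  \<and> (\<forall>A B t. t \<in> tests T A B \<longrightarrow> t \<noteq> [] \<and> set t \<subseteq> trans T A B)
  \<and> (\<forall>A B C. C \<in> trans T A B \<longrightarrow> (\<exists>t \<in> tests T A B. C \<in> set t))
    \<comment> \<open>identities\<close>
  \<and> (\<forall>A. [idt T A] \<in> tests T A A)
  \<and> (\<forall>A B C. C \<in> trans T A B \<longrightarrow> seqc T (idt T B) C = C \<and> seqc T C (idt T A) = C)
    \<comment> \<open>sequential composition of tests\<close>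
  \<and> (\<forall>A B C t s. t \<in> tests T A B \<longrightarrow> s \<in> tests T B C \<longrightarrow>
        [seqc T y x. x \<leftarrow> t, y \<leftarrow> s] \<in> tests T A C)
    \<comment> \<open>parallel composition of tests\<close>
  \<and> (\<forall>A B C D t s. t \<in> tests T A B \<longrightarrow> s \<in> tests T C D \<longrightarrow>
        [parc T x y. x \<leftarrow> t, y \<leftarrow> s] \<in> tests T (scomp T A C) (scomp T B D))
    \<comment> \<open>coarse-graining over a partition of the outcome set into m nonempty blocks\<close>
  \<and> (\<forall>A B t m f. t \<in> tests T A B \<longrightarrow> f ` {..<length t} = {..<(m::nat)} \<longrightarrow>
        map (\<lambda>k. \<Sum>i\<in>{i. i < length t \<and> f i = k}. t ! i) [0..<m] \<in> tests T A B)
    \<comment> \<open>conditioning\<close>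
  \<and> (\<forall>A B C t ss. t \<in> tests T A B \<longrightarrow> length ss = length t \<longrightarrow>
        (\<forall>i < length t. ss ! i \<in> tests T B C) \<longrightarrow>
        concat (map (\<lambda>i. map (\<lambda>D. seqc T D (t ! i)) (ss ! i)) [0..<length t]) \<in> tests T A C)
    \<comment> \<open>transformations act linearly; composition is bilinear\<close>
  \<and> (\<forall>x y z. seqc T (x + y) z = seqc T x z + seqc T y z \<and> seqc T x (y + z) = seqc T x y + seqc T x z)
  \<and> (\<forall>r x y. seqc T (r *\<^sub>R x) y = r *\<^sub>R seqc T x y \<and> seqc T x (r *\<^sub>R y) = r *\<^sub>R seqc T x y)
  \<and> (\<forall>x y z. parc T (x + y) z = parc T x z + parc T y z \<and> parc T x (y + z) = parc T x y + parc T x z)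
  \<and> (\<forall>r x y. parc T (r *\<^sub>R x) y = r *\<^sub>R parc T x y \<and> parc T x (r *\<^sub>R y) = r *\<^sub>R parc T x y)
    \<comment> \<open>transformations I -> I are probabilities in [0,1]; tests I -> I sum to 1;
        non-determinism: every binary probability distribution is a test\<close>
  \<and> idt T (sunit T) \<noteq> 0
  \<and> trans T (sunit T) (sunit T) = (\<lambda>r. r *\<^sub>R idt T (sunit T)) ` {0..1}
  \<and> (\<forall>t \<in> tests T (sunit T) (sunit T). sum_list t = idt T (sunit T))
  \<and> (\<forall>p::real. 0 \<le> p \<and> p \<le> 1 \<longrightarrow>
        [p *\<^sub>R idt T (sunit T), (1 - p) *\<^sub>R idt T (sunit T)] \<in> tests T (sunit T) (sunit T))
    \<comment> \<open>causality: unique deterministic effect, multiplicative under composition\<close>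
  \<and> (\<forall>A. [deff T A] \<in> tests T A (sunit T))
  \<and> (\<forall>A a. [a] \<in> tests T A (sunit T) \<longrightarrow> a = deff T A)
  \<and> (\<forall>A B. deff T (scomp T A B) = parc T (deff T A) (deff T B))
    \<comment> \<open>states are identified by their probabilities on effects\<close>
  \<and> (\<forall>A \<rho> \<sigma>. \<rho> \<in> trans T (sunit T) A \<longrightarrow> \<sigma> \<in> trans T (sunit T) A \<longrightarrow>
        (\<forall>a \<in> trans T A (sunit T). seqc T a \<rho> = seqc T a \<sigma>) \<longrightarrow> \<rho> = \<sigma>)
    \<comment> \<open>transformations are identified by their action (with ancillas) on states\<close>
  \<and> (\<forall>A B C C'. C \<in> trans T A B \<longrightarrow> C' \<in> trans T A B \<longrightarrow>
        (\<forall>S. \<forall>\<rho> \<in> trans T (sunit T) (scomp T A S).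
            seqc T (parc T C (idt T S)) \<rho> = seqc T (parc T C' (idt T S)) \<rho>) \<longrightarrow> C = C')
    \<comment> \<open>local discriminability\<close>
  \<and> (\<forall>A B \<Psi> \<Phi>. \<Psi> \<in> trans T (sunit T) (scomp T A B) \<longrightarrow> \<Phi> \<in> trans T (sunit T) (scomp T A B) \<longrightarrow>
        \<Psi> \<noteq> \<Phi> \<longrightarrow> (\<exists>a \<in> trans T A (sunit T). \<exists>b \<in> trans T B (sunit T).
            seqc T (parc T a b) \<Psi> \<noteq> seqc T (parc T a b) \<Phi>))"

definition states :: "('s, 't) opt_data \<Rightarrow> 's \<Rightarrow> 't set" where
  "states T A = trans T (sunit T) A"

definition normalized_state :: "('s, 't) opt_data \<Rightarrow> 's \<Rightarrow> 't \<Rightarrow> bool" where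
  "normalized_state T A \<rho> \<longleftrightarrow> \<rho> \<in> states T A \<and> seqc T (deff T A) \<rho> = idt T (sunit T)"

definition refines :: "('s, 't::real_vector) opt_data \<Rightarrow> 's \<Rightarrow> 's \<Rightarrow> 't \<Rightarrow> 't \<Rightarrow> bool" where
  "refines T A B D C \<longleftrightarrow> (\<exists>t \<in> tests T A B. \<exists>Y0 \<subseteq> {..<length t}.
      C = (\<Sum>j\<in>Y0. t ! j) \<and> D \<in> (\<lambda>j. t ! j) ` Y0)"

definition atomic :: "('s, 't::real_vector) opt_data \<Rightarrow> 's \<Rightarrow> 's \<Rightarrow> 't \<Rightarrow> bool" where
  "atomic T A B C \<longleftrightarrow> C \<in> trans T A B \<and>
     (\<forall>D. refines T A B D C \<longrightarrow> (\<exists>c::real. 0 \<le> c \<and> c \<le> 1 \<and> D = c *\<^sub>R C))"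

definition pure_state :: "('s, 't::real_vector) opt_data \<Rightarrow> 's \<Rightarrow> 't \<Rightarrow> bool" where
  "pure_state T A \<rho> \<longleftrightarrow> atomic T (sunit T) A \<rho>"

definition marginal :: "('s, 't) opt_data \<Rightarrow> 's \<Rightarrow> 's \<Rightarrow> 't \<Rightarrow> 't" where
  "marginal T A B \<sigma> = seqc T (parc T (idt T A) (deff T B)) \<sigma>"

definition purification :: "('s, 't::real_vector) opt_data \<Rightarrow> 's \<Rightarrow> 's \<Rightarrow> 't \<Rightarrow> 't \<Rightarrow> bool" where
  "purification T A B \<Psi> \<rho> \<longleftrightarrow>
     normalized_state T (scomp T A B) \<Psi> \<and> pure_state T (scomp T A B) \<Psi> \<and> marginal T A B \<Psi> = \<rho>"

fun syspow :: "('s, 't) opt_data \<Rightarrow> 's \<Rightarrow> nat \<Rightarrow> 's" where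
  "syspow T A 0 = sunit T"
| "syspow T A (Suc 0) = A"
| "syspow T A (Suc (Suc n)) = scomp T A (syspow T A (Suc n))"

fun tpow :: "('s, 't) opt_data \<Rightarrow> 't \<Rightarrow> nat \<Rightarrow> 't" where
  "tpow T \<rho> 0 = idt T (sunit T)"
| "tpow T \<rho> (Suc 0) = \<rho>"
| "tpow T \<rho> (Suc (Suc n)) = parc T \<rho> (tpow T \<rho> (Suc n))"

end

theory Submission
  imports Defs
begin

(*
  Expanding the tensor power, p^N rho1^(N) is one summand of a coarse-graining of a test whose
  total is rho2^(N); in the language of the theory, p^N rho1^(N) refines rho2^(N).  Refinement
  is preserved by sequential and parallel composition, so p^N Psi1 refines Psi2.  As Psi2 is
  pure, p^N Psi1 = c Psi2, and applying the deterministic effect to these normalized states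
  gives c = p^N, i.e. Psi1 = Psi2.  Symmetrically Psi3 = Psi2, hence rho1 = rho3 by taking
  marginals, a contradiction.
*)

lemma length_combinations: "length (concat (map (\<lambda>x. map (f x) s) t)) = length t * length s"
  by (induct t) simp_all

lemma nth_combinations:
  "i < length t \<Longrightarrow> j < length s \<Longrightarrow>
   concat (map (\<lambda>x. map (f x) s) t) ! (i * length s + j) = f (t ! i) (s ! j)"
proof (induct t arbitrary: i)
  case (Cons a t)
  then show ?case
    by (cases i) (simp_all add: nth_append length_combinations add.assoc)
qed simp

lemma pair_index_inj: "inj_on (\<lambda>(i, j). i * n + j) (UNIV \<times> {..<n::nat})"
proof (rule inj_onI, clarsimp)
  fix i j i' j' assume "j < n" "j' < n" "i * n + j = i' * n + j'"
  then show "i = i' \<and> j = j'"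
    by (metis div_mult_self1 less_nat_zero_code mod_mult_self3 div_less mod_less add.commute add_0)
qed

lemma pair_index_bound:
  assumes "i < m" "j < n" shows "i * n + j < m * (n::nat)"
proof -
  have "i * n + j < Suc i * n" using assms(2) by simp
  also have "\<dots> \<le> m * n" using assms(1) by (intro mult_le_mono1) simp
  finally show ?thesis .
qed

definition coarse_summand :: "'t::real_vector list \<Rightarrow> 't \<Rightarrow> 't \<Rightarrow> bool" where
  "coarse_summand t D C \<longleftrightarrow> (\<exists>Y \<subseteq> {..<length t}. C = (\<Sum>j\<in>Y. t ! j) \<and> D \<in> (\<lambda>j. t ! j) ` Y)"

lemma refines_iff_coarse_summand:
  "refines T A B D C \<longleftrightarrow> (\<exists>t \<in> tests T A B. coarse_summand t D C)"
  by (auto simp: refines_def coarse_summand_def)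

lemma coarse_summand_member:
  assumes "C \<in> set t" shows "coarse_summand t C C"
proof -
  obtain k where "k < length t" "C = t ! k" using assms by (metis in_set_conv_nth)
  then show ?thesis unfolding coarse_summand_def by (intro exI[of _ "{k}"]) auto
qed

lemma coarse_summand_combinations:
  assumes lin_left: "\<And>z. linear (\<lambda>x. f x z)" and lin_right: "\<And>z. linear (f z)"
    and "coarse_summand t D C" "coarse_summand s D' C'"
  shows "coarse_summand (concat (map (\<lambda>x. map (f x) s) t)) (f D D') (f C C')"
proof -
  let ?L = "concat (map (\<lambda>x. map (f x) s) t)"
  let ?idx = "\<lambda>(i, j). i * length s + j"
  obtain Y0 a where Y0: "Y0 \<subseteq> {..<length t}" "C = (\<Sum>i\<in>Y0. t ! i)" "a \<in> Y0" "D = t ! a"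
    using assms(3) unfolding coarse_summand_def by blast
  obtain Y1 b where Y1: "Y1 \<subseteq> {..<length s}" "C' = (\<Sum>j\<in>Y1. s ! j)" "b \<in> Y1" "D' = s ! b"
    using assms(4) unfolding coarse_summand_def by blast
  have entry: "?L ! ?idx (i, j) = f (t ! i) (s ! j)" if "(i, j) \<in> Y0 \<times> Y1" for i j
    using that Y0(1) Y1(1) by (auto intro: nth_combinations)
  have inj: "inj_on ?idx (Y0 \<times> Y1)"
    using Y1(1) by (intro inj_on_subset[OF pair_index_inj]) blast
  have "f C C' = (\<Sum>i\<in>Y0. \<Sum>j\<in>Y1. f (t ! i) (s ! j))"
    unfolding Y0(2) Y1(2) real_vector.linear_sum[OF lin_left] real_vector.linear_sum[OF lin_right]
    by (rule sum.swap)
  also have "\<dots> = (\<Sum>(i, j)\<in>Y0 \<times> Y1. ?L ! ?idx (i, j))"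
    unfolding sum.cartesian_product using entry by (intro sum.cong) auto
  also have "\<dots> = (\<Sum>k\<in>?idx ` (Y0 \<times> Y1). ?L ! k)"
    by (subst sum.reindex[OF inj]) (simp add: case_prod_beta)
  finally have sum: "f C C' = (\<Sum>k\<in>?idx ` (Y0 \<times> Y1). ?L ! k)" .
  have "f D D' \<in> (\<lambda>k. ?L ! k) ` ?idx ` (Y0 \<times> Y1)"
    using Y0(3,4) Y1(3,4) entry by (intro image_eqI[of _ _ "?idx (a, b)"]) auto
  moreover have "?idx ` (Y0 \<times> Y1) \<subseteq> {..<length ?L}"
    using Y0(1) Y1(1) by (auto simp: length_combinations intro!: pair_index_bound)
  ultimately show ?thesis unfolding coarse_summand_def using sum by blast
qed

context
  fixes T :: "('s, 't::real_vector) opt_data"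
  assumes O: "opt T"
begin

text \<open>The axioms of an operational-probabilistic theory used below, each restated exactly as
  the corresponding conjunct of \<open>opt\<close> so that it is extracted by elimination of conjunctions.\<close>

lemma tests_nonempty_subset [rule_format]:
  "\<forall>A B t. t \<in> tests T A B \<longrightarrow> t \<noteq> [] \<and> set t \<subseteq> trans T A B"
  using O unfolding opt_def by (elim conjE) assumption

lemma trans_in_test [rule_format]:
  "\<forall>A B C. C \<in> trans T A B \<longrightarrow> (\<exists>t \<in> tests T A B. C \<in> set t)"
  using O unfolding opt_def by (elim conjE) assumption

lemma seqc_idt [rule_format]:
  "\<forall>A B C. C \<in> trans T A B \<longrightarrow> seqc T (idt T B) C = C \<and> seqc T C (idt T A) = C"
  using O unfolding opt_def by (elim conjE) assumption

lemma tests_seqc [rule_format]: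
  "\<forall>A B C t s. t \<in> tests T A B \<longrightarrow> s \<in> tests T B C \<longrightarrow>
     [seqc T y x. x \<leftarrow> t, y \<leftarrow> s] \<in> tests T A C"
  using O unfolding opt_def by (elim conjE) assumption

lemma tests_parc [rule_format]:
  "\<forall>A B C D t s. t \<in> tests T A B \<longrightarrow> s \<in> tests T C D \<longrightarrow>
     [parc T x y. x \<leftarrow> t, y \<leftarrow> s] \<in> tests T (scomp T A C) (scomp T B D)"
  using O unfolding opt_def by (elim conjE) assumption

lemma tests_conditioning [rule_format]:
  "\<forall>A B C t ss. t \<in> tests T A B \<longrightarrow> length ss = length t \<longrightarrow>
     (\<forall>i < length t. ss ! i \<in> tests T B C) \<longrightarrow>
     concat (map (\<lambda>i. map (\<lambda>D. seqc T D (t ! i)) (ss ! i)) [0..<length t]) \<in> tests T A C"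
  using O unfolding opt_def by (elim conjE) assumption

lemma scomp_sunit [rule_format]: "\<forall>A. scomp T A (sunit T) = A"
  using O unfolding opt_def by (elim conjE) assumption

lemma idt_sunit_nonzero: "idt T (sunit T) \<noteq> 0"
  using O unfolding opt_def by (elim conjE) assumption

lemma coin_test [rule_format]:
  "\<forall>p::real. 0 \<le> p \<and> p \<le> 1 \<longrightarrow>
     [p *\<^sub>R idt T (sunit T), (1 - p) *\<^sub>R idt T (sunit T)] \<in> tests T (sunit T) (sunit T)"
  using O unfolding opt_def by (elim conjE) assumption

lemma seqc_additive [rule_format]:
  "\<forall>x y z. seqc T (x + y) z = seqc T x z + seqc T y z \<and> seqc T x (y + z) = seqc T x y + seqc T x z"
  using O unfolding opt_def by (elim conjE) assumption

lemma seqc_homogeneous [rule_format]: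
  "\<forall>r x y. seqc T (r *\<^sub>R x) y = r *\<^sub>R seqc T x y \<and> seqc T x (r *\<^sub>R y) = r *\<^sub>R seqc T x y"
  using O unfolding opt_def by (elim conjE) assumption

lemma parc_additive [rule_format]:
  "\<forall>x y z. parc T (x + y) z = parc T x z + parc T y z \<and> parc T x (y + z) = parc T x y + parc T x z"
  using O unfolding opt_def by (elim conjE) assumption

lemma parc_homogeneous [rule_format]:
  "\<forall>r x y. parc T (r *\<^sub>R x) y = r *\<^sub>R parc T x y \<and> parc T x (r *\<^sub>R y) = r *\<^sub>R parc T x y"
  using O unfolding opt_def by (elim conjE) assumption

lemma seqc_bilinear: "linear (\<lambda>x. seqc T x z)" "linear (seqc T z)"
  by (simp_all add: linearI seqc_additive seqc_homogeneous)

lemma parc_bilinear: "linear (\<lambda>x. parc T x z)" "linear (parc T z)"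
  by (simp_all add: linearI parc_additive parc_homogeneous)

lemma refines_parc:
  assumes "refines T A B D C" "refines T A' B' D' C'"
  shows "refines T (scomp T A A') (scomp T B B') (parc T D D') (parc T C C')"
proof -
  obtain t s where "t \<in> tests T A B" "coarse_summand t D C"
    "s \<in> tests T A' B'" "coarse_summand s D' C'"
    using assms unfolding refines_iff_coarse_summand by blast
  then show ?thesis unfolding refines_iff_coarse_summand
    using tests_parc coarse_summand_combinations[OF parc_bilinear] by blast
qed

lemma refines_seqc:
  assumes "refines T A B D C" and E: "E \<in> trans T B B'"
  shows "refines T A B' (seqc T E D) (seqc T E C)"
proof -
  obtain t where t: "t \<in> tests T A B" "coarse_summand t D C"
    using assms(1) unfolding refines_iff_coarse_summand by blast
  obtain s where s: "s \<in> tests T B B'" "coarse_summand s E E"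
    using trans_in_test[OF E] coarse_summand_member by blast
  have "coarse_summand [seqc T y x. x \<leftarrow> t, y \<leftarrow> s] (seqc T E D) (seqc T E C)"
    using coarse_summand_combinations[of "\<lambda>x y. seqc T y x", OF seqc_bilinear(2) seqc_bilinear(1)]
      t(2) s(2) by simp
  then show ?thesis unfolding refines_iff_coarse_summand using tests_seqc[OF t(1) s(1)] by blast
qed

text \<open>A weighted component refines a mixture of two states: toss a \<open>p\<close>-coin and, conditioned
  on the outcome, run a test containing \<open>\<rho>\<close> or one containing \<open>\<sigma>\<close>.\<close>

lemma refines_mixture:
  assumes \<rho>: "\<rho> \<in> states T A" and \<sigma>: "\<sigma> \<in> states T A" and p: "0 \<le> p" "p \<le> 1"
  shows "refines T (sunit T) A (p *\<^sub>R \<rho>) (p *\<^sub>R \<rho> + (1 - p) *\<^sub>R \<sigma>)"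
proof -
  obtain t1 k1 where t1: "t1 \<in> tests T (sunit T) A" "k1 < length t1" "\<rho> = t1 ! k1"
    using trans_in_test \<rho> unfolding states_def by (metis in_set_conv_nth)
  obtain t3 k3 where t3: "t3 \<in> tests T (sunit T) A" "k3 < length t3" "\<sigma> = t3 ! k3"
    using trans_in_test \<sigma> unfolding states_def by (metis in_set_conv_nth)
  let ?coin = "[p *\<^sub>R idt T (sunit T), (1 - p) *\<^sub>R idt T (sunit T)]"
  let ?L = "map (\<lambda>D. p *\<^sub>R D) t1 @ map (\<lambda>D. (1 - p) *\<^sub>R D) t3"
  have "concat (map (\<lambda>i. map (\<lambda>D. seqc T D (?coin ! i)) ([t1, t3] ! i)) [0..<length ?coin])
      \<in> tests T (sunit T) A"
    using t1(1) t3(1) p by (intro tests_conditioning) (auto simp: coin_test less_Suc_eq)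
  moreover have "map (\<lambda>D. seqc T D (r *\<^sub>R idt T (sunit T))) t = map (\<lambda>D. r *\<^sub>R D) t"
    if "t \<in> tests T (sunit T) A" for r t
    using tests_nonempty_subset[OF that] seqc_idt real_vector.linear_scale[OF seqc_bilinear(2)]
    by (auto simp: subset_iff)
  ultimately have L: "?L \<in> tests T (sunit T) A"
    using t1(1) t3(1) by (simp add: upt_rec)
  have "coarse_summand ?L (p *\<^sub>R \<rho>) (p *\<^sub>R \<rho> + (1 - p) *\<^sub>R \<sigma>)"
    unfolding coarse_summand_def using t1(2,3) t3(2,3)
    by (intro exI[of _ "{k1, length t1 + k3}"]) (auto simp: nth_append)
  then show ?thesis unfolding refines_iff_coarse_summand using L by blast
qed

lemma refines_tpow_mixture:
  assumes "\<rho> \<in> states T A" "\<sigma> \<in> states T A" "0 \<le> p" "p \<le> 1"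
  shows "refines T (sunit T) (syspow T A (Suc n)) (p ^ Suc n *\<^sub>R tpow T \<rho> (Suc n))
           (tpow T (p *\<^sub>R \<rho> + (1 - p) *\<^sub>R \<sigma>) (Suc n))"
proof (induct n)
  case 0
  then show ?case using refines_mixture[OF assms] by simp
next
  case (Suc n)
  from refines_parc[OF refines_mixture[OF assms] Suc] show ?case
    by (simp add: scomp_sunit real_vector.linear_scale[OF parc_bilinear(1)]
        real_vector.linear_scale[OF parc_bilinear(2)] mult_ac)
qed

text \<open>A nonzero multiple of a normalized state can refine a pure normalized state only if the
  two states coincide: purity makes it a multiple of the pure state, and comparing probabilities
  of the deterministic effect shows that both multiples agree.\<close>

lemma pure_refined_by_normalized:
  assumes pure: "pure_state T S \<Psi>" and "normalized_state T S \<Psi>" "normalized_state T S \<Phi>"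
    and refines: "refines T (sunit T) S (q *\<^sub>R \<Phi>) \<Psi>" and "q \<noteq> 0"
  shows "\<Phi> = \<Psi>"
proof -
  obtain c where c: "q *\<^sub>R \<Phi> = c *\<^sub>R \<Psi>"
    using pure refines unfolding pure_state_def atomic_def by blast
  have "q *\<^sub>R idt T (sunit T) = c *\<^sub>R idt T (sunit T)"
    using arg_cong[OF c, of "seqc T (deff T S)"] assms(2,3)
    by (simp add: normalized_state_def real_vector.linear_scale[OF seqc_bilinear(2)])
  then have "c = q" using idt_sunit_nonzero by (simp add: scaleR_cancel_right)
  then show ?thesis using c \<open>q \<noteq> 0\<close> by simp
qed

lemma pure_image_of_mixture:
  assumes "\<rho> \<in> states T A" "\<sigma> \<in> states T A" "0 < p" "p \<le> 1"
    and C: "C \<in> trans T (syspow T A (Suc n)) S"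
    and "normalized_state T S (seqc T C (tpow T \<rho> (Suc n)))"
    and "pure_state T S \<Psi>" "normalized_state T S \<Psi>"
    and \<Psi>: "seqc T C (tpow T (p *\<^sub>R \<rho> + (1 - p) *\<^sub>R \<sigma>) (Suc n)) = \<Psi>"
  shows "seqc T C (tpow T \<rho> (Suc n)) = \<Psi>"
proof (rule pure_refined_by_normalized)
  have "0 \<le> p" using assms(3) by simp
  then show "refines T (sunit T) S (p ^ Suc n *\<^sub>R seqc T C (tpow T \<rho> (Suc n))) \<Psi>"
    using refines_seqc[OF refines_tpow_mixture[OF assms(1,2) _ assms(4)] C] \<Psi>
    by (simp add: real_vector.linear_scale[OF seqc_bilinear(2)])
qed (use assms in auto)

end

theorem mainTheorem20:
  fixes T :: "('s, 't::real_vector) opt_data"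
    and A B :: 's and \<rho>1 \<rho>2 \<rho>3 \<Psi>1 \<Psi>2 \<Psi>3 :: 't and p :: real
  assumes "opt T"
    and "normalized_state T A \<rho>1" "normalized_state T A \<rho>2" "normalized_state T A \<rho>3"
    and "\<rho>1 \<noteq> \<rho>3"
    and "0 < p" "p < 1" "\<rho>2 = p *\<^sub>R \<rho>1 + (1 - p) *\<^sub>R \<rho>3"
    and "purification T A B \<Psi>1 \<rho>1" "purification T A B \<Psi>2 \<rho>2" "purification T A B \<Psi>3 \<rho>3"
  shows "\<not> (\<exists>N::nat. N \<ge> 1 \<and> (\<exists>C \<in> trans T (syspow T A N) (scomp T A B).
            seqc T C (tpow T \<rho>1 N) = \<Psi>1 \<and> seqc T C (tpow T \<rho>2 N) = \<Psi>2 \<and> seqc T C (tpow T \<rho>3 N) = \<Psi>3))"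
proof
  assume "\<exists>N::nat. N \<ge> 1 \<and> (\<exists>C \<in> trans T (syspow T A N) (scomp T A B).
            seqc T C (tpow T \<rho>1 N) = \<Psi>1 \<and> seqc T C (tpow T \<rho>2 N) = \<Psi>2 \<and> seqc T C (tpow T \<rho>3 N) = \<Psi>3)"
  then obtain n C where C: "C \<in> trans T (syspow T A (Suc n)) (scomp T A B)"
    "seqc T C (tpow T \<rho>1 (Suc n)) = \<Psi>1" "seqc T C (tpow T \<rho>2 (Suc n)) = \<Psi>2"
    "seqc T C (tpow T \<rho>3 (Suc n)) = \<Psi>3"
    by (metis Suc_le_D One_nat_def)
  have states: "\<rho>1 \<in> states T A" "\<rho>3 \<in> states T A"
    using assms(2,4) unfolding normalized_state_def by auto
  have \<Psi>2: "pure_state T (scomp T A B) \<Psi>2" "normalized_state T (scomp T A B) \<Psi>2"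
    using assms(10) unfolding purification_def by auto
  have mixture_swapped: "seqc T C (tpow T ((1 - p) *\<^sub>R \<rho>3 + (1 - (1 - p)) *\<^sub>R \<rho>1) (Suc n)) = \<Psi>2"
    using assms(8) C(3) by (simp add: add.commute)
  have "\<Psi>1 = \<Psi>2"
    using pure_image_of_mixture[OF assms(1) states _ _ C(1) _ \<Psi>2] C assms(6-9)
    unfolding purification_def by auto
  moreover have "\<Psi>3 = \<Psi>2"
    using pure_image_of_mixture[OF assms(1) states(2,1), where p = "1 - p", OF _ _ C(1) _ \<Psi>2 mixture_swapped]
      C(4) assms(6,7,11) unfolding purification_def by auto
  ultimately show False
    using assms(5,9,11) unfolding purification_def by auto
qed

end
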